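(* Let $n\ge3$, $\alpha<1$, $\beta\in[0,\pi]$ and $\rho\in[0,1)$. Define $$C_{\alpha,\infty}(\rho e_1;l_\beta)=\max_{\zeta\in\mathbb{S}^{n-1}}\frac{\big|(n-\alpha)(1-\rho^2)\sin\beta\,\zeta_2-\big((2-3\alpha+n)\rho+(2-\alpha-n)\rho^3+(\alpha-n+(-4+3\alpha+n)\rho^2)\zeta_1\big)\cos\beta\big|}{|\rho e_1-\zeta|^{n+2-\alpha}},$$ where $\zeta=(\zeta_1,\dots,\zeta_n)$. Then $\mathbf{C}_{\alpha,\infty}(\rho e_1;l_\beta)=C_{n,\alpha}(1-\rho^2)^{-\alpha}C_{\alpha,\infty}(\rho e_1;l_\beta)$.
   Context: $\mathbb{B}^n$ is the open unit ball of $\mathbb{R}^n$, $\mathbb{S}^{n-1}$ the unit sphere with normalized surface measure $\sigma$; $e_i$ is the $i$-th standard unit vector, $l_\beta=\cos\beta\,e_1+\sin\beta\,e_2$. For $\alpha<1$, $P_\alpha(x,\zeta)=C_{n,\alpha}\frac{(1-|x|^2)^{1-\alpha}}{|x-\zeta|^{n-\alpha}}$ with $C_{n,\alpha}=\frac{\Gamma(\frac{n-\alpha}{2})\Gamma(1-\frac\alpha2)}{\Gamma(\frac n2)\Gamma(1-\alpha)}$, and $P_\alpha[\phi](x)=\int_{\mathbb{S}^{n-1}}P_\alpha(x,\zeta)\phi(\zeta)\,d\sigma(\zeta)$. $\mathbf{C}_{\alpha,\infty}(x;l)$ denotes the smallest constant such that $|\langle\nabla u(x),l\rangle|\le \mathbf{C}_{\alpha,\infty}(x;l)\|\phi\|_{L^1(\mathbb{S}^{n-1},\mathbb{R})}$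 for all $\phi\in L^1(\mathbb{S}^{n-1},\mathbb{R})$, where $u=P_\alpha[\phi]$. *)

theory Defs
  imports "HOL-Analysis.Analysis"
begin

text \<open>Normalized surface measure on the unit sphere of real^'n, realised as the cone
  measure: push-forward of the normalized Lebesgue measure on the unit ball under
  radial projection x |-> x / |x|.\<close>
definition sphere_measure :: "(real^'n) measure" where
  "sphere_measure = distr (uniform_measure lborel (ball 0 1)) borel (\<lambda>x. x /\<^sub>R norm x)"

definition C_const :: "nat \<Rightarrow> real \<Rightarrow> real" where
  "C_const n \<alpha> = Gamma ((real n - \<alpha>) / 2) * Gamma (1 - \<alpha> / 2)
                   / (Gamma (real n / 2) * Gamma (1 - \<alpha>))"

definition P_kernel :: "real \<Rightarrow> real^'n \<Rightarrow> real^'n \<Rightarrow> real" where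
  "P_kernel \<alpha> x \<zeta> = C_const CARD('n) \<alpha> * (1 - (norm x)\<^sup>2) powr (1 - \<alpha>)
                      / norm (x - \<zeta>) powr (real CARD('n) - \<alpha>)"

definition P_transform :: "real \<Rightarrow> (real^'n \<Rightarrow> real) \<Rightarrow> real^'n \<Rightarrow> real" where
  "P_transform \<alpha> \<phi> x = (LINT \<zeta>|sphere_measure. P_kernel \<alpha> x \<zeta> * \<phi> \<zeta>)"

definition L1_norm :: "(real^'n \<Rightarrow> real) \<Rightarrow> real" where
  "L1_norm \<phi> = (LINT \<zeta>|sphere_measure. \<bar>\<phi> \<zeta>\<bar>)"

definition admissible_consts :: "real \<Rightarrow> real^'n \<Rightarrow> real^'n \<Rightarrow> real set" where
  "admissible_consts \<alpha> x l = {C. \<forall>\<phi>. integrable sphere_measure \<phi> \<longrightarrow>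
      \<bar>frechet_derivative (P_transform \<alpha> \<phi>) (at x) l\<bar> \<le> C * L1_norm \<phi>}"

end

theory Submission
  imports Defs
begin

(* Differentiating under the integral sign gives <grad u(x), l> = integral of K * phi over the
   sphere, where K(zeta) = <grad_x P_alpha(x, zeta), l> is continuous on the sphere.  For such a
   functional the best constant C in |integral K phi| <= C ||phi||_1 is max |K|: the bound is
   immediate, and testing with +-indicator functions of small caps around a maximiser of |K|
   (caps have positive measure) shows that no smaller constant works.  At x = rho e_1 and
   l = l_beta an explicit computation of the gradient gives
   |K| = C_{n,alpha} (1 - rho^2)^(-alpha) times the quotient maximised in the definition of
   C_{alpha,infinity}(rho e_1; l_beta). *)

lemma sets_sphere_measure [simp, measurable_cong]:
  "sets (sphere_measure :: (real^'n) measure) = sets borel"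
  by (simp add: sphere_measure_def)

lemma finite_measure_sphere_measure: "finite_measure (sphere_measure :: (real^'n) measure)"
  unfolding sphere_measure_def
  by (intro finite_measure.finite_measure_distr finite_measureI)
     (auto simp: emeasure_lborel_ball_finite ennreal_divide_eq_top_iff)

lemma AE_sphere_measure: "AE \<zeta> in (sphere_measure :: (real^'n) measure). \<zeta> \<in> sphere 0 1"
  unfolding sphere_measure_def
proof (subst AE_distr_iff)
  show "AE x in uniform_measure lborel (ball (0::real^'n) 1). x /\<^sub>R norm x \<in> sphere 0 1"
    by (intro AE_uniform_measureI) (use AE_lborel_singleton[of 0] in \<open>auto elim!: eventually_mono\<close>)
qed auto

lemma radial_projection_ball_subset:
  fixes z :: "'a::real_normed_vector"
  assumes "norm z = 1" "0 < r" "r \<le> 1/4"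
  shows "ball (z /\<^sub>R 2) r \<subseteq> ball 0 1 \<inter> (\<lambda>y. y /\<^sub>R norm y) -` ball z (4 * r)"
proof
  fix y assume y: "y \<in> ball (z /\<^sub>R 2) r"
  have "\<bar>norm y - 1/2\<bar> \<le> norm (y - z /\<^sub>R 2)"
    using norm_triangle_ineq3[of y "z /\<^sub>R 2"] assms(1) by simp
  also have "\<dots> < r" using y by (simp add: dist_norm norm_minus_commute)
  finally have ny: "\<bar>norm y - 1/2\<bar> < r" .
  then have "norm y > 0" using assms(3) by linarith
  then have "y /\<^sub>R norm y - 2 *\<^sub>R y = (1 - 2 * norm y) *\<^sub>R (y /\<^sub>R norm y)"
    by (simp add: algebra_simps)
  then have "norm (y /\<^sub>R norm y - 2 *\<^sub>R y) = \<bar>1 - 2 * norm y\<bar>"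
    using \<open>norm y > 0\<close> by (simp add: abs_mult mult.assoc)
  then have "norm (y /\<^sub>R norm y - 2 *\<^sub>R y) < 2 * r"
    using ny by linarith
  moreover have "norm (2 *\<^sub>R y - z) < 2 * r"
  proof -
    have "2 *\<^sub>R y - z = 2 *\<^sub>R (y - z /\<^sub>R 2)" by (simp add: algebra_simps)
    then show ?thesis
      using y by (simp only: norm_scaleR) (simp add: dist_norm norm_minus_commute)
  qed
  ultimately have "norm (y /\<^sub>R norm y - z) < 4 * r"
    using norm_diff_triangle_less by fastforce
  moreover have "norm y < 1" using ny assms(3) by linarith
  ultimately show "y \<in> ball 0 1 \<inter> (\<lambda>y. y /\<^sub>R norm y) -` ball z (4 * r)"
    by (simp add: dist_norm norm_minus_commute)
qed

lemma emeasure_sphere_measure_ball_pos: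
  fixes z :: "real^'n"
  assumes "z \<in> sphere 0 1" "d > 0"
  shows "emeasure sphere_measure (ball z d) > 0"
proof -
  define r where "r = min (1/4) (d/4)"
  have r: "0 < r" "r \<le> 1/4" "4 * r \<le> d" using assms(2) by (auto simp: r_def)
  let ?radial = "\<lambda>y::real^'n. y /\<^sub>R norm y"
  have "?radial \<in> borel_measurable borel" by measurable
  then have radial_ball: "?radial -` ball z d \<in> sets borel"
    using measurable_sets_borel[of ?radial borel "ball z d"] by simp
  have "ball (z /\<^sub>R 2) r \<subseteq> ball 0 1 \<inter> ?radial -` ball z d"
    using radial_projection_ball_subset[of z r] assms(1) r subset_ball[OF r(3), of z] by auto
  then have "emeasure lborel (ball (z /\<^sub>R 2) r) \<le> emeasure lborel (ball 0 1 \<inter> ?radial -` ball z d)"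
    using radial_ball by (intro emeasure_mono) auto
  moreover have "emeasure lborel (ball (z /\<^sub>R 2) r) > 0" using r by (simp add: emeasure_ball)
  moreover have "emeasure sphere_measure (ball z d)
      = emeasure lborel (ball 0 1 \<inter> ?radial -` ball z d) / emeasure lborel (ball (0::real^'n) 1)"
    unfolding sphere_measure_def using radial_ball by (simp add: emeasure_distr)
  ultimately show ?thesis
    using emeasure_lborel_ball_finite[of "0::real^'n" 1]
    by (simp add: ennreal_zero_less_divide)
qed

lemma integrable_scaleR_continuous_on:
  fixes f :: "'b::metric_space \<Rightarrow> 'c::{banach, second_countable_topology}"
  assumes "integrable M \<phi>" "f \<in> borel_measurable M"
    and "compact S" "continuous_on S f" "AE z in M. z \<in> S"
  shows "integrable M (\<lambda>z. \<phi> z *\<^sub>R f z)"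
proof -
  obtain B where B: "\<And>z. z \<in> S \<Longrightarrow> norm (f z) \<le> B"
    using compact_imp_bounded[OF compact_continuous_image[OF assms(4,3)]]
    unfolding bounded_iff by blast
  show ?thesis
  proof (rule Bochner_Integration.integrable_bound[where f = "\<lambda>z. \<bar>B\<bar> * \<phi> z"])
    show "integrable M (\<lambda>z. \<bar>B\<bar> * \<phi> z)" using assms(1) by simp
    show "(\<lambda>z. \<phi> z *\<^sub>R f z) \<in> borel_measurable M"
      using assms(1,2) by measurable
    show "AE z in M. norm (\<phi> z *\<^sub>R f z) \<le> norm (\<bar>B\<bar> * \<phi> z)"
      using assms(5)
    proof eventually_elim
      case (elim z)
      then have "norm (f z) \<le> \<bar>B\<bar>" using B by force
      then show ?case by (simp add: abs_mult mult.commute[of "\<bar>B\<bar>"] mult_left_mono)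
    qed
  qed
qed

lemma abs_integral_mult_le:
  fixes K \<phi> :: "'b \<Rightarrow> real"
  assumes "integrable M \<phi>" "K \<in> borel_measurable M"
    and "AE z in M. z \<in> S" "\<And>z. z \<in> S \<Longrightarrow> \<bar>K z\<bar> \<le> B"
  shows "\<bar>\<integral>z. K z * \<phi> z \<partial>M\<bar> \<le> B * (\<integral>z. \<bar>\<phi> z\<bar> \<partial>M)"
proof -
  have bound: "AE z in M. \<bar>K z * \<phi> z\<bar> \<le> B * \<bar>\<phi> z\<bar>"
    using assms(3) by eventually_elim (simp add: abs_mult assms(4) mult_right_mono)
  have "integrable M (\<lambda>z. K z * \<phi> z)"
  proof (rule Bochner_Integration.integrable_bound)
    show "integrable M (\<lambda>z. B * \<phi> z)" using assms(1) by simp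
    show "(\<lambda>z. K z * \<phi> z) \<in> borel_measurable M"
      using assms(2) borel_measurable_integrable[OF assms(1)] by (rule borel_measurable_times)
    show "AE z in M. norm (K z * \<phi> z) \<le> norm (B * \<phi> z)"
      using bound by (rule eventually_mono)
        (metis abs_ge_self abs_ge_zero abs_mult mult_right_mono order_trans real_norm_def)
  qed
  have "\<bar>\<integral>z. K z * \<phi> z \<partial>M\<bar> \<le> (\<integral>z. \<bar>K z * \<phi> z\<bar> \<partial>M)"
    by (rule integral_abs_bound)
  also have "\<dots> \<le> (\<integral>z. B * \<bar>\<phi> z\<bar> \<partial>M)"
    using \<open>integrable M (\<lambda>z. K z * \<phi> z)\<close> assms(1) bound by (intro integral_mono_AE) auto
  finally show ?thesis by simp
qed

lemma measure_mult_le_integral_indicator: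
  fixes K :: "'b \<Rightarrow> real"
  assumes "finite_measure M" "B \<in> sets M" "K \<in> borel_measurable M"
    and "AE z in M. z \<in> B \<longrightarrow> a \<le> K z \<and> \<bar>K z\<bar> \<le> b"
  shows "a * measure M B \<le> (\<integral>z. K z * indicator B z \<partial>M)"
proof -
  interpret finite_measure M by (rule assms(1))
  have "emeasure M B < \<infinity>" by (simp add: less_top[symmetric])
  then have "integrable M (\<lambda>z. indicator B z *\<^sub>R K z)"
    by (rule integrableI_bounded_set_indicator[OF assms(2,3)]) (use assms(4) in \<open>auto elim: eventually_mono\<close>)
  moreover have "integrable M (indicator B :: 'b \<Rightarrow> real)"
    using assms(2) by (simp add: less_top[symmetric])
  ultimately have "(\<integral>z. a * indicator B z \<partial>M) \<le> (\<integral>z. K z * indicator B z \<partial>M)"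
    using assms(4)
    by (intro integral_mono_AE) (auto elim!: eventually_mono split: split_indicator simp: mult.commute)
  then show ?thesis
    using assms(2) by (simp add: Int_absorb2 sets.sets_into_space)
qed

lemma abs_le_L1_operator_bound:
  fixes K :: "'b::metric_space \<Rightarrow> real"
  assumes "finite_measure M" "sets M = sets borel" "K \<in> borel_measurable M"
    and "AE z in M. z \<in> S" "continuous (at z0 within S) K"
    and "\<And>d. d > 0 \<Longrightarrow> emeasure M (ball z0 d) > 0"
    and bound: "\<And>\<phi>. integrable M \<phi> \<Longrightarrow> \<bar>\<integral>z. K z * \<phi> z \<partial>M\<bar> \<le> C * (\<integral>z. \<bar>\<phi> z\<bar> \<partial>M)"
  shows "\<bar>K z0\<bar> \<le> C"
proof (rule field_le_epsilon)
  interpret finite_measure M by (rule assms(1))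
  fix \<eta> :: real assume "\<eta> > 0"
  then obtain \<delta> where "\<delta> > 0" and \<delta>: "\<And>z. z \<in> S \<Longrightarrow> dist z z0 < \<delta> \<Longrightarrow> \<bar>K z - K z0\<bar> < \<eta>"
    using assms(5) unfolding continuous_within_eps_delta dist_real_def by metis
  define B where "B = ball z0 \<delta>"
  define s :: real where "s = (if K z0 \<ge> 0 then 1 else -1)"
  define \<phi> where "\<phi> = (\<lambda>z. s * indicator B z)"
  have "B \<in> sets M" using assms(2) by (simp add: B_def)
  then have "integrable M \<phi>" by (simp add: \<phi>_def emeasure_finite less_top[symmetric])
  have "s * K z0 = \<bar>K z0\<bar>" "\<bar>s\<bar> = 1" by (auto simp: s_def)
  have "AE z in M. z \<in> B \<longrightarrow> \<bar>K z0\<bar> - \<eta> \<le> s * K z \<and> \<bar>s * K z\<bar> \<le> \<bar>K z0\<bar> + \<eta>"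
    using assms(4)
  proof eventually_elim
    case (elim z)
    show ?case
    proof
      assume "z \<in> B"
      then have "\<bar>s * K z - s * K z0\<bar> < \<eta>"
        using \<delta>[OF elim] \<open>\<bar>s\<bar> = 1\<close> by (simp add: B_def dist_commute abs_mult flip: right_diff_distrib)
      then show "\<bar>K z0\<bar> - \<eta> \<le> s * K z \<and> \<bar>s * K z\<bar> \<le> \<bar>K z0\<bar> + \<eta>"
        using \<open>s * K z0 = \<bar>K z0\<bar>\<close> by arith
    qed
  qed
  then have "(\<bar>K z0\<bar> - \<eta>) * measure M B \<le> (\<integral>z. s * K z * indicator B z \<partial>M)"
    using assms(1,3) \<open>B \<in> sets M\<close> by (intro measure_mult_le_integral_indicator) auto
  also have "\<dots> \<le> \<bar>\<integral>z. K z * \<phi> z \<partial>M\<bar>"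
    by (simp add: \<phi>_def mult_ac)
  also have "\<dots> \<le> C * measure M B"
    using bound[OF \<open>integrable M \<phi>\<close>] \<open>\<bar>s\<bar> = 1\<close> \<open>B \<in> sets M\<close>
    by (simp add: \<phi>_def abs_mult Int_absorb2 sets.sets_into_space)
  finally show "\<bar>K z0\<bar> \<le> C + \<eta>"
    using assms(6)[OF \<open>\<delta> > 0\<close>] \<open>B \<in> sets M\<close>
    by (simp add: B_def emeasure_eq_measure mult_le_cancel_right_pos)
qed

lemma onorm_inner_le: "onorm (\<lambda>v. v \<bullet> w) \<le> norm (w :: 'a::real_inner)"
  by (rule onorm_bound) (simp_all add: Cauchy_Schwarz_ineq2 mult.commute)

lemma uniform_gradient_remainder:
  fixes K :: "'a::euclidean_space \<Rightarrow> 'b::metric_space \<Rightarrow> real" and G :: "'a \<Rightarrow> 'b \<Rightarrow> 'a"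
  assumes "compact S" "r > 0" "e > 0"
    and deriv: "\<And>y z. y \<in> cball x r \<Longrightarrow> z \<in> S \<Longrightarrow> GDERIV (\<lambda>y. K y z) y :> G y z"
    and contG: "continuous_on (cball x r \<times> S) (\<lambda>(y, z). G y z)"
  shows "\<exists>d>0. \<forall>y z. norm (y - x) < d \<longrightarrow> z \<in> S \<longrightarrow>
           \<bar>K y z - K x z - (y - x) \<bullet> G x z\<bar> \<le> e * norm (y - x)"
proof -
  have "uniformly_continuous_on (cball x r \<times> S) (\<lambda>(y, z). G y z)"
    using compact_uniformly_continuous[OF contG] assms(1) by (simp add: compact_Times)
  then obtain \<delta> where "\<delta> > 0" and \<delta>:
    "\<And>p p'. p \<in> cball x r \<times> S \<Longrightarrow> p' \<in> cball x r \<times> S \<Longrightarrow> dist p' p < \<delta>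
       \<Longrightarrow> dist ((\<lambda>(y, z). G y z) p') ((\<lambda>(y, z). G y z) p) < e"
    unfolding uniformly_continuous_on_def using \<open>e > 0\<close> by metis
  define d where "d = min \<delta> r"
  have "\<bar>K y z - K x z - (y - x) \<bullet> G x z\<bar> \<le> e * norm (y - x)"
    if y: "norm (y - x) < d" and z: "z \<in> S" for y z
  proof -
    have "norm ((K y z - y \<bullet> G x z) - (K x z - x \<bullet> G x z)) \<le> e * norm (y - x)"
    proof (rule differentiable_bound[where S = "ball x d"])
      fix w assume w: "w \<in> ball x d"
      then have "w \<in> cball x r" by (simp add: d_def)
      have "((\<lambda>w. K w z - w \<bullet> G x z) has_derivative (\<lambda>v. v \<bullet> (G w z - G x z))) (at w)"
        using deriv[OF \<open>w \<in> cball x r\<close> z] unfolding gderiv_def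
        by (auto intro!: derivative_eq_intros simp: inner_diff_right)
      then show "((\<lambda>w. K w z - w \<bullet> G x z) has_derivative (\<lambda>v. v \<bullet> (G w z - G x z))) (at w within ball x d)"
        by (rule has_derivative_at_withinI)
      have "dist (w, z) (x, z) < \<delta>"
        using w by (simp add: dist_Pair_Pair d_def dist_commute)
      then have "norm (G w z - G x z) \<le> e"
        using \<delta>[of "(x, z)" "(w, z)"] \<open>w \<in> cball x r\<close> z assms(2) by (simp add: dist_norm)
      then show "onorm (\<lambda>v. v \<bullet> (G w z - G x z)) \<le> e"
        by (rule order_trans[OF onorm_inner_le])
    qed (use y \<open>\<delta> > 0\<close> assms(2) in \<open>auto simp: d_def dist_norm norm_minus_commute\<close>)
    then show ?thesis by (simp add: inner_diff_left algebra_simps)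
  qed
  moreover have "d > 0" using \<open>\<delta> > 0\<close> assms(2) by (simp add: d_def)
  ultimately show ?thesis by blast
qed

lemma GDERIV_integral_uniform_remainder:
  fixes K :: "'a::euclidean_space \<Rightarrow> 'b \<Rightarrow> real" and G :: "'b \<Rightarrow> 'a"
  assumes "AE z in M. z \<in> S" "integrable M \<phi>" "r > 0"
    and intK: "\<And>y. norm (y - x) < r \<Longrightarrow> integrable M (\<lambda>z. K y z * \<phi> z)"
    and intG: "integrable M (\<lambda>z. \<phi> z *\<^sub>R G z)"
    and measK: "\<And>y. K y \<in> borel_measurable M" and measG: "G \<in> borel_measurable M"
    and remainder: "\<And>e. e > 0 \<Longrightarrow> \<exists>d>0. \<forall>y z. norm (y - x) < d \<longrightarrow> z \<in> S \<longrightarrow>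
                      \<bar>K y z - K x z - (y - x) \<bullet> G z\<bar> \<le> e * norm (y - x)"
  shows "GDERIV (\<lambda>y. \<integral>z. K y z * \<phi> z \<partial>M) x :> (\<integral>z. \<phi> z *\<^sub>R G z \<partial>M)"
proof -
  define F where "F = (\<lambda>y. \<integral>z. K y z * \<phi> z \<partial>M)"
  define W where "W = (\<integral>z. \<phi> z *\<^sub>R G z \<partial>M)"
  define N where "N = (\<integral>z. \<bar>\<phi> z\<bar> \<partial>M)"
  have "N \<ge> 0" by (simp add: N_def)
  have "(F has_derivative (\<lambda>h. h \<bullet> W)) (at x)"
    unfolding has_derivative_at_alt
  proof (intro conjI allI impI bounded_linear_inner_left)
    fix e :: real assume "e > 0"
    define \<epsilon> where "\<epsilon> = e / (N + 1)"
    have "\<epsilon> > 0" "\<epsilon> * N \<le> e"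
      using \<open>e > 0\<close> \<open>N \<ge> 0\<close> by (auto simp: \<epsilon>_def field_simps)
    then obtain d where "d > 0" and rem:
      "\<And>y z. norm (y - x) < d \<Longrightarrow> z \<in> S \<Longrightarrow> \<bar>K y z - K x z - (y - x) \<bullet> G z\<bar> \<le> \<epsilon> * norm (y - x)"
      using remainder by blast
    show "\<exists>d>0. \<forall>y. norm (y - x) < d \<longrightarrow> norm (F y - F x - (y - x) \<bullet> W) \<le> e * norm (y - x)"
    proof (intro exI[of _ "min d r"] conjI allI impI)
      show "min d r > 0" using \<open>d > 0\<close> assms(3) by simp
      fix y assume y: "norm (y - x) < min d r"
      have "integrable M (\<lambda>z. (y - x) \<bullet> (\<phi> z *\<^sub>R G z))"
        using intG by (rule integrable_inner_right)
      then have "F y - F x - (y - x) \<bullet> W = (\<integral>z. (K y z - K x z - (y - x) \<bullet> G z) * \<phi> z \<partial>M)"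
        using intK[of y] intK[of x] y assms(3) intG
        by (simp add: F_def W_def left_diff_distrib right_diff_distrib Bochner_Integration.integral_diff
            integral_inner_right[symmetric] mult.commute[of _ "\<phi> _"])
      moreover have "(\<lambda>z. K y z - K x z - (y - x) \<bullet> G z) \<in> borel_measurable M"
        using measK[of y] measK[of x] measG by measurable
      ultimately have "norm (F y - F x - (y - x) \<bullet> W) \<le> \<epsilon> * norm (y - x) * N"
        unfolding N_def real_norm_def using rem y
        by (simp add: abs_integral_mult_le[OF assms(2) _ assms(1)])
      also have "\<dots> \<le> e * norm (y - x)"
        using \<open>\<epsilon> * N \<le> e\<close> by (simp add: mult.commute[of _ N] mult.assoc[symmetric] mult_right_mono)
      finally show "norm (F y - F x - (y - x) \<bullet> W) \<le> e * norm (y - x)" .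
    qed
  qed
  then show ?thesis by (simp add: gderiv_def F_def W_def)
qed

lemma GDERIV_integral:
  fixes K :: "'a::euclidean_space \<Rightarrow> 'b::metric_space \<Rightarrow> real" and G :: "'a \<Rightarrow> 'b \<Rightarrow> 'a"
  assumes "compact S" "r > 0" "AE z in M. z \<in> S" "integrable M \<phi>"
    and deriv: "\<And>y z. y \<in> cball x r \<Longrightarrow> z \<in> S \<Longrightarrow> GDERIV (\<lambda>y. K y z) y :> G y z"
    and contG: "continuous_on (cball x r \<times> S) (\<lambda>(y, z). G y z)"
    and contK: "\<And>y. y \<in> cball x r \<Longrightarrow> continuous_on S (K y)"
    and measK: "\<And>y. K y \<in> borel_measurable M" and measG: "G x \<in> borel_measurable M"
  shows "GDERIV (\<lambda>y. \<integral>z. K y z * \<phi> z \<partial>M) x :> (\<integral>z. \<phi> z *\<^sub>R G x z \<partial>M)"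
proof (rule GDERIV_integral_uniform_remainder[OF assms(3,4,2) _ _ measK measG])
  show "integrable M (\<lambda>z. K y z * \<phi> z)" if "norm (y - x) < r" for y
    using integrable_scaleR_continuous_on[OF assms(4) measK assms(1) contK assms(3)] that
    by (simp add: dist_norm norm_minus_commute mult.commute)
  have "Pair x ` S \<subseteq> cball x r \<times> S" using assms(2) by auto
  then have "continuous_on S (G x)"
    using continuous_on_compose2[OF contG continuous_on_Pair[OF continuous_on_const continuous_on_id]]
    by auto
  then show "integrable M (\<lambda>z. \<phi> z *\<^sub>R G x z)"
    using integrable_scaleR_continuous_on[OF assms(4) measG assms(1) _ assms(3)] by blast
qed (rule uniform_gradient_remainder[OF assms(1,2) _ deriv contG])

lemma GDERIV_norm_diff_powr:
  fixes x z :: "'a::real_inner"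
  assumes "x \<noteq> z"
  shows "GDERIV (\<lambda>x. norm (x - z) powr a) x :> (a * norm (x - z) powr (a - 1)) *\<^sub>R sgn (x - z)"
proof -
  have "GDERIV (\<lambda>x. norm (x - z)) x :> sgn (x - z)"
    unfolding gderiv_def
    using has_derivative_compose[OF has_derivative_diff[OF has_derivative_ident has_derivative_const]
        has_derivative_norm[of "x - z"]] assms
    by simp
  moreover have "DERIV (\<lambda>t. t powr a) (norm (x - z)) :> a * norm (x - z) powr (a - 1)"
    using assms by (intro has_real_derivative_powr) auto
  ultimately show ?thesis by (rule GDERIV_DERIV_compose)
qed

lemma GDERIV_one_minus_sqnorm_powr:
  fixes x :: "'a::real_inner"
  assumes "norm x < 1"
  shows "GDERIV (\<lambda>x. (1 - (norm x)\<^sup>2) powr a) x :> (a * (1 - (norm x)\<^sup>2) powr (a - 1)) *\<^sub>R (- (2 *\<^sub>R x))"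
proof -
  have "GDERIV (\<lambda>x. 1 - (norm x)\<^sup>2) x :> - (2 *\<^sub>R x)"
    unfolding gderiv_def
    by (rule has_derivative_eq_rhs[OF has_derivative_diff[OF has_derivative_const has_derivative_sqnorm_at]])
       (auto simp: inner_commute)
  moreover have "DERIV (\<lambda>t. t powr a) (1 - (norm x)\<^sup>2) :> a * (1 - (norm x)\<^sup>2) powr (a - 1)"
    using assms by (intro has_real_derivative_powr) (auto simp: abs_square_less_1)
  ultimately show ?thesis by (rule GDERIV_DERIV_compose)
qed

definition P_kernel_grad :: "real \<Rightarrow> real^'n \<Rightarrow> real^'n \<Rightarrow> real^'n" where
  "P_kernel_grad \<alpha> x \<zeta> =
     (C_const CARD('n) \<alpha> * (1 - (norm x)\<^sup>2) powr (- \<alpha>) / norm (x - \<zeta>) powr (real CARD('n) + 2 - \<alpha>))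
     *\<^sub>R (((\<alpha> - real CARD('n)) * (1 - (norm x)\<^sup>2)) *\<^sub>R (x - \<zeta>)
            - (2 * (1 - \<alpha>) * (norm (x - \<zeta>))\<^sup>2) *\<^sub>R x)"

lemma GDERIV_P_kernel:
  fixes x \<zeta> :: "real^'n"
  assumes "norm x < 1" "x \<noteq> \<zeta>"
  shows "GDERIV (\<lambda>x. P_kernel \<alpha> x \<zeta>) x :> P_kernel_grad \<alpha> x \<zeta>"
proof -
  define n where "n = real CARD('n)"
  define C where "C = C_const CARD('n) \<alpha>"
  define q where "q = 1 - (norm x)\<^sup>2"
  define d where "d = norm (x - \<zeta>)"
  have "q > 0" using assms(1) by (simp add: q_def abs_square_less_1)
  have "d > 0" using assms(2) by (simp add: d_def)
  define A where "A = C * q powr (- \<alpha>) / d powr (n + 2 - \<alpha>)"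
  have kernel: "(\<lambda>x. P_kernel \<alpha> x \<zeta>) = (\<lambda>x. C * ((1 - (norm x)\<^sup>2) powr (1 - \<alpha>) * norm (x - \<zeta>) powr (\<alpha> - n)))"
    by (simp add: P_kernel_def C_def n_def powr_minus[symmetric] divide_inverse mult.assoc)
  have deriv: "GDERIV (\<lambda>x. C * ((1 - (norm x)\<^sup>2) powr (1 - \<alpha>) * norm (x - \<zeta>) powr (\<alpha> - n))) x
      :> C *\<^sub>R (q powr (1 - \<alpha>) *\<^sub>R (((\<alpha> - n) * d powr (\<alpha> - n - 1)) *\<^sub>R sgn (x - \<zeta>))
           + d powr (\<alpha> - n) *\<^sub>R (((1 - \<alpha>) * q powr (- \<alpha>)) *\<^sub>R (- (2 *\<^sub>R x)))) + 0"
    using GDERIV_mult[OF GDERIV_const[of C] GDERIV_mult[OF GDERIV_one_minus_sqnorm_powr[OF assms(1), of "1 - \<alpha>"]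
          GDERIV_norm_diff_powr[OF assms(2), of "\<alpha> - n"]]]
    by (simp add: q_def d_def)
  have c1: "C * q powr (1 - \<alpha>) * ((\<alpha> - n) * d powr (\<alpha> - n - 1)) / d = A * ((\<alpha> - n) * q)"
    and c2: "C * d powr (\<alpha> - n) * ((1 - \<alpha>) * q powr (- \<alpha>)) * 2 = A * (2 * (1 - \<alpha>) * d\<^sup>2)"
    using \<open>q > 0\<close> \<open>d > 0\<close> by (simp_all add: A_def powr_diff powr_minus powr_add field_simps power2_eq_square)
  have "C *\<^sub>R (q powr (1 - \<alpha>) *\<^sub>R (((\<alpha> - n) * d powr (\<alpha> - n - 1)) *\<^sub>R sgn (x - \<zeta>))
           + d powr (\<alpha> - n) *\<^sub>R (((1 - \<alpha>) * q powr (- \<alpha>)) *\<^sub>R (- (2 *\<^sub>R x))))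
      = (C * q powr (1 - \<alpha>) * ((\<alpha> - n) * d powr (\<alpha> - n - 1)) / d) *\<^sub>R (x - \<zeta>)
        - (C * d powr (\<alpha> - n) * ((1 - \<alpha>) * q powr (- \<alpha>)) * 2) *\<^sub>R x"
    by (simp add: sgn_div_norm d_def scaleR_add_right scaleR_diff_right divide_inverse mult.assoc)
  also have "\<dots> = A *\<^sub>R (((\<alpha> - n) * q) *\<^sub>R (x - \<zeta>) - (2 * (1 - \<alpha>) * d\<^sup>2) *\<^sub>R x)"
    unfolding c1 c2 by (simp add: scaleR_diff_right)
  finally show ?thesis
    using deriv by (simp add: kernel P_kernel_grad_def A_def C_def n_def q_def d_def)
qed

lemma P_kernel_measurable: "P_kernel \<alpha> x \<in> borel_measurable sphere_measure"
  unfolding P_kernel_def by measurable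

lemma P_kernel_grad_measurable: "P_kernel_grad \<alpha> x \<in> borel_measurable sphere_measure"
  unfolding P_kernel_grad_def by measurable

lemma continuous_on_P_kernel_sphere:
  assumes "norm x < 1"
  shows "continuous_on (sphere 0 1) (P_kernel \<alpha> (x :: real^'n))"
  unfolding P_kernel_def using assms by (intro continuous_intros) auto

lemma continuous_on_P_kernel_grad_sphere:
  assumes "norm x < 1"
  shows "continuous_on (sphere 0 1) (P_kernel_grad \<alpha> (x :: real^'n))"
  unfolding P_kernel_grad_def using assms
  by (intro continuous_intros) (auto simp: abs_square_less_1 abs_square_eq_1)

lemma continuous_on_P_kernel_grad:
  "continuous_on {(x, \<zeta>). norm x < 1 \<and> x \<noteq> \<zeta>} (\<lambda>(x, \<zeta>). P_kernel_grad \<alpha> x (\<zeta> :: real^'n))"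
  unfolding P_kernel_grad_def case_prod_unfold
  by (intro continuous_intros) (auto simp: abs_square_less_1 abs_square_eq_1)

lemma GDERIV_P_transform:
  fixes x :: "real^'n"
  assumes "norm x < 1" "integrable sphere_measure \<phi>"
  shows "GDERIV (P_transform \<alpha> \<phi>) x :> (\<integral>\<zeta>. \<phi> \<zeta> *\<^sub>R P_kernel_grad \<alpha> x \<zeta> \<partial>sphere_measure)"
proof -
  define r where "r = (1 - norm x) / 2"
  have "r > 0" using assms(1) by (simp add: r_def)
  have in_ball: "norm y < 1" if "y \<in> cball x r" for y
    using that norm_triangle_sub[of y x] assms(1) by (simp add: r_def dist_norm norm_minus_commute)
  then have "cball x r \<times> sphere 0 1 \<subseteq> {(y, \<zeta>). norm y < 1 \<and> y \<noteq> \<zeta>}"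
    by fastforce
  then show ?thesis
    unfolding P_transform_def
    by (intro GDERIV_integral[where S = "sphere 0 1" and r = r] compact_sphere \<open>r > 0\<close>
        AE_sphere_measure assms(2) GDERIV_P_kernel continuous_on_subset[OF continuous_on_P_kernel_grad]
        continuous_on_P_kernel_sphere P_kernel_measurable P_kernel_grad_measurable)
       (use in_ball in fastforce)+
qed

lemma frechet_derivative_P_transform:
  fixes x :: "real^'n"
  assumes "norm x < 1" "integrable sphere_measure \<phi>"
  shows "frechet_derivative (P_transform \<alpha> \<phi>) (at x) l
       = (\<integral>\<zeta>. (P_kernel_grad \<alpha> x \<zeta> \<bullet> l) * \<phi> \<zeta> \<partial>sphere_measure)"
proof -
  have "integrable sphere_measure (\<lambda>\<zeta>. \<phi> \<zeta> *\<^sub>R P_kernel_grad \<alpha> x \<zeta>)"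
    by (rule integrable_scaleR_continuous_on[OF assms(2) P_kernel_grad_measurable compact_sphere
          continuous_on_P_kernel_grad_sphere[OF assms(1)] AE_sphere_measure])
  then show ?thesis
    using frechet_derivative_at[OF GDERIV_P_transform[OF assms, where \<alpha> = \<alpha>, unfolded gderiv_def], symmetric]
    by (simp add: integral_inner_right[symmetric] inner_commute mult.commute)
qed

lemma least_admissible_const:
  fixes x l \<zeta>0 :: "real^'n"
  assumes "norm x < 1" "\<zeta>0 \<in> sphere 0 1"
    and max: "\<And>\<zeta>. \<zeta> \<in> sphere 0 1 \<Longrightarrow> \<bar>P_kernel_grad \<alpha> x \<zeta> \<bullet> l\<bar> \<le> \<bar>P_kernel_grad \<alpha> x \<zeta>0 \<bullet> l\<bar>"
  shows "\<bar>P_kernel_grad \<alpha> x \<zeta>0 \<bullet> l\<bar> \<in> admissible_consts \<alpha> x l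
     \<and> (\<forall>C \<in> admissible_consts \<alpha> x l. \<bar>P_kernel_grad \<alpha> x \<zeta>0 \<bullet> l\<bar> \<le> C)"
proof -
  define K where "K = (\<lambda>\<zeta>. P_kernel_grad \<alpha> x \<zeta> \<bullet> l)"
  have admissible: "admissible_consts \<alpha> x l = {C. \<forall>\<phi>. integrable sphere_measure \<phi> \<longrightarrow>
      \<bar>\<integral>\<zeta>. K \<zeta> * \<phi> \<zeta> \<partial>sphere_measure\<bar> \<le> C * (\<integral>\<zeta>. \<bar>\<phi> \<zeta>\<bar> \<partial>sphere_measure)}"
    unfolding admissible_consts_def L1_norm_def K_def
    using frechet_derivative_P_transform[OF assms(1)] by simp
  have meas: "K \<in> borel_measurable sphere_measure"
    unfolding K_def using P_kernel_grad_measurable by measurable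
  have "continuous_on (sphere 0 1) K"
    unfolding K_def by (intro continuous_intros continuous_on_P_kernel_grad_sphere assms(1))
  then have cont: "continuous (at \<zeta>0 within sphere 0 1) K"
    using assms(2) by (rule continuous_on_imp_continuous_within[OF _ order_refl])
  have K_max: "\<And>\<zeta>. \<zeta> \<in> sphere 0 1 \<Longrightarrow> \<bar>K \<zeta>\<bar> \<le> \<bar>K \<zeta>0\<bar>"
    using max by (simp add: K_def)
  have "\<bar>\<integral>\<zeta>. K \<zeta> * \<phi> \<zeta> \<partial>sphere_measure\<bar> \<le> \<bar>K \<zeta>0\<bar> * (\<integral>\<zeta>. \<bar>\<phi> \<zeta>\<bar> \<partial>sphere_measure)"
    if "integrable sphere_measure \<phi>" for \<phi>
    using abs_integral_mult_le[OF that meas AE_sphere_measure K_max] .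
  moreover have "\<bar>K \<zeta>0\<bar> \<le> C"
    if "\<forall>\<phi>. integrable sphere_measure \<phi> \<longrightarrow>
      \<bar>\<integral>\<zeta>. K \<zeta> * \<phi> \<zeta> \<partial>sphere_measure\<bar> \<le> C * (\<integral>\<zeta>. \<bar>\<phi> \<zeta>\<bar> \<partial>sphere_measure)" for C
    using abs_le_L1_operator_bound[OF finite_measure_sphere_measure sets_sphere_measure meas
        AE_sphere_measure cont emeasure_sphere_measure_ball_pos[OF assms(2)]] that
    by blast
  ultimately have "\<bar>K \<zeta>0\<bar> \<in> admissible_consts \<alpha> x l \<and> (\<forall>C \<in> admissible_consts \<alpha> x l. \<bar>K \<zeta>0\<bar> \<le> C)"
    unfolding admissible by blast
  then show ?thesis unfolding K_def .
qed

lemma P_kernel_grad_axis_inner: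
  fixes \<alpha> \<beta> \<rho> :: real and i1 i2 :: "'n::finite" and \<zeta> :: "real^'n"
  assumes "i1 \<noteq> i2" "norm \<zeta> = 1"
  defines "x \<equiv> \<rho> *\<^sub>R axis i1 1" and "n \<equiv> real CARD('n)"
  shows "P_kernel_grad \<alpha> x \<zeta> \<bullet> (cos \<beta> *\<^sub>R axis i1 1 + sin \<beta> *\<^sub>R axis i2 1)
       = C_const CARD('n) \<alpha> * (1 - \<rho>\<^sup>2) powr (- \<alpha>) *
         ((n - \<alpha>) * (1 - \<rho>\<^sup>2) * sin \<beta> * \<zeta> $ i2
          - ((2 - 3*\<alpha> + n) * \<rho> + (2 - \<alpha> - n) * \<rho> ^ 3
             + (\<alpha> - n + (-4 + 3*\<alpha> + n) * \<rho>\<^sup>2) * \<zeta> $ i1) * cos \<beta>)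
         / norm (x - \<zeta>) powr (n + 2 - \<alpha>)"
proof -
  have "\<zeta> \<bullet> \<zeta> = 1" using assms(2) by (simp add: power2_norm_eq_inner[symmetric])
  have nx: "(norm x)\<^sup>2 = \<rho>\<^sup>2" by (simp add: x_def)
  have nxz: "(norm (x - \<zeta>))\<^sup>2 = 1 + \<rho>\<^sup>2 - 2 * \<rho> * \<zeta> $ i1"
    unfolding power2_norm_eq_inner using \<open>\<zeta> \<bullet> \<zeta> = 1\<close>
    by (simp add: x_def inner_diff_left inner_diff_right inner_axis inner_axis' inner_commute power2_eq_square)
  have xl: "x \<bullet> (cos \<beta> *\<^sub>R axis i1 1 + sin \<beta> *\<^sub>R axis i2 1) = \<rho> * cos \<beta>"
    using assms(1) by (simp add: x_def inner_add_right inner_axis_axis)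
  have zl: "\<zeta> \<bullet> (cos \<beta> *\<^sub>R axis i1 1 + sin \<beta> *\<^sub>R axis i2 1) = cos \<beta> * \<zeta> $ i1 + sin \<beta> * \<zeta> $ i2"
    by (simp add: inner_add_right inner_axis)
  show ?thesis
    unfolding P_kernel_grad_def n_def[symmetric] inner_scaleR_left inner_diff_left nx nxz xl zl
    by (simp add: field_simps power2_eq_square power3_eq_cube)
qed

lemma C_const_pos: "\<alpha> < 1 \<Longrightarrow> 0 < n \<Longrightarrow> C_const n \<alpha> > 0"
  unfolding C_const_def by (intro divide_pos_pos mult_pos_pos Gamma_real_pos) auto

theorem lemma3p2:
  fixes \<alpha> \<beta> \<rho> :: real and i1 i2 :: "'n::finite"
  assumes "CARD('n) \<ge> 3" and "i1 \<noteq> i2"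
    and "\<alpha> < 1" and "0 \<le> \<beta>" and "\<beta> \<le> pi" and "0 \<le> \<rho>" and "\<rho> < 1"
  defines "x \<equiv> \<rho> *\<^sub>R (axis i1 1 :: real^'n)"
    and "l \<equiv> cos \<beta> *\<^sub>R (axis i1 1 :: real^'n) + sin \<beta> *\<^sub>R axis i2 1"
    and "n \<equiv> real CARD('n)"
  defines "Cstar \<equiv> (SUP \<zeta>\<in>sphere (0::real^'n) 1.
      \<bar>(n - \<alpha>) * (1 - \<rho>\<^sup>2) * sin \<beta> * \<zeta> $ i2
        - ((2 - 3*\<alpha> + n) * \<rho> + (2 - \<alpha> - n) * \<rho> ^ 3
           + (\<alpha> - n + (-4 + 3*\<alpha> + n) * \<rho>\<^sup>2) * \<zeta> $ i1) * cos \<beta>\<bar>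
      / norm (x - \<zeta>) powr (n + 2 - \<alpha>))"
  shows "C_const CARD('n) \<alpha> * (1 - \<rho>\<^sup>2) powr (-\<alpha>) * Cstar \<in> admissible_consts \<alpha> x l
       \<and> (\<forall>C \<in> admissible_consts \<alpha> x l. C_const CARD('n) \<alpha> * (1 - \<rho>\<^sup>2) powr (-\<alpha>) * Cstar \<le> C)"
proof -
  define c where "c = C_const CARD('n) \<alpha> * (1 - \<rho>\<^sup>2) powr (-\<alpha>)"
  define Q where "Q \<zeta> = \<bar>(n - \<alpha>) * (1 - \<rho>\<^sup>2) * sin \<beta> * \<zeta> $ i2
        - ((2 - 3*\<alpha> + n) * \<rho> + (2 - \<alpha> - n) * \<rho> ^ 3
           + (\<alpha> - n + (-4 + 3*\<alpha> + n) * \<rho>\<^sup>2) * \<zeta> $ i1) * cos \<beta>\<bar>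
      / norm (x - \<zeta>) powr (n + 2 - \<alpha>)" for \<zeta> :: "real^'n"
  have "norm x < 1" using assms(6,7) by (simp add: x_def)
  have "C_const CARD('n) \<alpha> > 0" using C_const_pos[OF assms(3)] by simp
  then have "c > 0" using assms(6,7) by (simp add: c_def abs_square_less_1 power2_eq_1_iff)
  have grad_Q: "\<bar>P_kernel_grad \<alpha> x \<zeta> \<bullet> l\<bar> = c * Q \<zeta>" if "\<zeta> \<in> sphere 0 1" for \<zeta>
    using P_kernel_grad_axis_inner[OF assms(2), of \<zeta> \<alpha> \<rho> \<beta>] that \<open>C_const CARD('n) \<alpha> > 0\<close>
    by (simp add: Q_def c_def x_def l_def n_def abs_mult abs_divide mult.assoc)
  have "continuous_on (sphere 0 1) Q"
    unfolding Q_def using \<open>norm x < 1\<close> by (intro continuous_intros) auto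
  then obtain \<zeta>0 where \<zeta>0: "\<zeta>0 \<in> sphere 0 1" and \<zeta>0_max: "\<And>\<zeta>. \<zeta> \<in> sphere 0 1 \<Longrightarrow> Q \<zeta> \<le> Q \<zeta>0"
    using continuous_attains_sup[OF compact_sphere] by (metis norm_axis_1 mem_sphere_0 empty_iff)
  have "Cstar = Q \<zeta>0"
    unfolding Cstar_def Q_def[symmetric] using \<zeta>0 \<zeta>0_max by (intro cSup_eq_maximum) auto
  then have "c * Cstar = \<bar>P_kernel_grad \<alpha> x \<zeta>0 \<bullet> l\<bar>"
    using grad_Q[OF \<zeta>0] by simp
  moreover have "\<bar>P_kernel_grad \<alpha> x \<zeta> \<bullet> l\<bar> \<le> \<bar>P_kernel_grad \<alpha> x \<zeta>0 \<bullet> l\<bar>" if "\<zeta> \<in> sphere 0 1" for \<zeta>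
    using grad_Q[OF that] grad_Q[OF \<zeta>0] \<zeta>0_max[OF that] \<open>c > 0\<close> by simp
  ultimately show ?thesis
    using least_admissible_const[OF \<open>norm x < 1\<close> \<zeta>0] by (simp add: c_def)
qed

end
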